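(* Let $\mathcal{K}$ be a statistical $\mathcal{ALC}$ knowledge base and $C,D$ $\mathcal{ALC}$ concepts with $\mathcal{K} \models_p (C \mid D)[m,M]$. Then for every $x$ with $m < x < M$ and every $\epsilon > 0$ there is $\mathcal{I}_{x,\epsilon} \in \mathrm{Mod}(\mathcal{K})$ with $[D]^{\mathcal{I}_{x,\epsilon}} > 0$ and $$\left| \frac{[C \sqcap D]^{\mathcal{I}_{x,\epsilon}}}{[D]^{\mathcal{I}_{x,\epsilon}}} - x \right| < \epsilon .$$
   Context: $\mathcal{ALC}$ concepts over disjoint sets $N_C$, $N_R$: $C ::= \top \mid A \mid \neg C \mid C \sqcap C \mid \exists r.C$, standard semantics. Interpretations $\mathcal{I} = (\Delta^{\mathcal{I}}, \cdot^{\mathcal{I}})$ have non-empty finite domain; $[X]^{\mathcal{I}} := |X^{\mathcal{I}}|$. A conditional is $(C \mid D)[\ell,u]$ with concepts $C,D$ and rationals $0 \le \ell \le u \le 1$; $\mathcal{I} \models (C \mid D)[\ell,u]$ iff $[D]^{\mathcal{I}} = 0$ or $[C \sqcap D]^{\mathcal{I}}/[D]^{\mathcal{I}} \in [\ell,u]$. A statistical $\mathcal{ALC}$ knowledge base $\mathcal{K}$ is a finite set of conditionals; $\mathrm{Mod}(\mathcal{K})$ is the set of finite interpretations satisfying all of them. p-entailment: if there is some $\mathcal{I} \in \mathrm{Mod}(\mathcal{K})$ with $[D]^{\mathcal{I}} > 0$, then $\mathcal{K} \models_p (C \mid D)[m,M]$ where $m = \inf$ and $M = \sup$ of $[C \sqcap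 D]^{\mathcal{I}}/[D]^{\mathcal{I}}$ over all $\mathcal{I} \in \mathrm{Mod}(\mathcal{K})$ with $[D]^{\mathcal{I}} > 0$. *)

theory Defs
  imports Complex_Main
begin

datatype ('c, 'r) concept =
    Top
  | Atom 'c
  | Neg "('c, 'r) concept"
  | Conj "('c, 'r) concept" "('c, 'r) concept"
  | Ex 'r "('c, 'r) concept"

text \<open>Interpretations: domain elements are natural numbers (every finite
  interpretation is isomorphic to one of these); the domain is a finite
  non-empty set.\<close>
record ('c, 'r) interp =
  dom :: "nat set"
  cint :: "'c \<Rightarrow> nat set"
  rint :: "'r \<Rightarrow> (nat \<times> nat) set"

definition valid_interp :: "('c, 'r) interp \<Rightarrow> bool" where
  "valid_interp I \<longleftrightarrow> finite (dom I) \<and> dom I \<noteq> {} \<and>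
     (\<forall>A. cint I A \<subseteq> dom I) \<and> (\<forall>r. rint I r \<subseteq> dom I \<times> dom I)"

fun ext :: "('c, 'r) interp \<Rightarrow> ('c, 'r) concept \<Rightarrow> nat set" where
  "ext I Top = dom I"
| "ext I (Atom A) = cint I A"
| "ext I (Neg C) = dom I - ext I C"
| "ext I (Conj C D) = ext I C \<inter> ext I D"
| "ext I (Ex r C) = {x \<in> dom I. \<exists>y. (x, y) \<in> rint I r \<and> y \<in> ext I C}"

definition cnt :: "('c, 'r) interp \<Rightarrow> ('c, 'r) concept \<Rightarrow> nat" where
  "cnt I C = card (ext I C)"

record ('c, 'r) conditional =
  ccons :: "('c, 'r) concept"
  cante :: "('c, 'r) concept"
  lower :: rat
  upper :: rat

definition wf_conditional :: "('c, 'r) conditional \<Rightarrow> bool" where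
  "wf_conditional c \<longleftrightarrow> 0 \<le> lower c \<and> lower c \<le> upper c \<and> upper c \<le> 1"

definition sat_cond :: "('c, 'r) interp \<Rightarrow> ('c, 'r) conditional \<Rightarrow> bool" where
  "sat_cond I c \<longleftrightarrow> cnt I (cante c) = 0 \<or>
     (let q = real (cnt I (Conj (ccons c) (cante c))) / real (cnt I (cante c))
      in real_of_rat (lower c) \<le> q \<and> q \<le> real_of_rat (upper c))"

type_synonym ('c, 'r) kb = "('c, 'r) conditional set"

definition wf_kb :: "('c, 'r) kb \<Rightarrow> bool" where
  "wf_kb K \<longleftrightarrow> finite K \<and> (\<forall>c\<in>K. wf_conditional c)"

definition Mod :: "('c, 'r) kb \<Rightarrow> ('c, 'r) interp set" where
  "Mod K = {I. valid_interp I \<and> (\<forall>c\<in>K. sat_cond I c)}"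

definition ratios :: "('c, 'r) kb \<Rightarrow> ('c, 'r) concept \<Rightarrow> ('c, 'r) concept \<Rightarrow> real set" where
  "ratios K C D = {real (cnt I (Conj C D)) / real (cnt I D) | I. I \<in> Mod K \<and> cnt I D > 0}"

definition p_entails :: "('c, 'r) kb \<Rightarrow> ('c, 'r) concept \<Rightarrow> ('c, 'r) concept \<Rightarrow> real \<Rightarrow> real \<Rightarrow> bool" where
  "p_entails K C D m M \<longleftrightarrow> (\<exists>I\<in>Mod K. cnt I D > 0) \<and>
     m = Inf (ratios K C D) \<and> M = Sup (ratios K C D)"

end

theory Submission
  imports Defs
begin

text \<open>Conditionals are homogeneous linear constraints on the counts of an interpretation, so a
  disjoint sum of models of \<open>K\<close> is again a model of \<open>K\<close>, and its counts are the sums of the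
  counts of the parts. Taking a model \<open>I\<^sub>1\<close> with ratio below \<open>x\<close>, a model \<open>I\<^sub>2\<close> with ratio
  above \<open>x\<close>, and \<open>a\<close> resp. \<open>b\<close> disjoint copies of them, the resulting model has ratio
  \<open>(a p\<^sub>1 + b p\<^sub>2) / (a q\<^sub>1 + b q\<^sub>2)\<close>; these weighted mediants come arbitrarily close to
  every point strictly between \<open>p\<^sub>1/q\<^sub>1\<close> and \<open>p\<^sub>2/q\<^sub>2\<close>.\<close>

definition rename_interp :: "(nat \<Rightarrow> nat) \<Rightarrow> ('c, 'r) interp \<Rightarrow> ('c, 'r) interp" where
  "rename_interp f I =
     \<lparr>dom = f ` dom I, cint = \<lambda>A. f ` cint I A, rint = \<lambda>r. map_prod f f ` rint I r\<rparr>"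

definition union_interp :: "('c, 'r) interp \<Rightarrow> ('c, 'r) interp \<Rightarrow> ('c, 'r) interp" where
  "union_interp I J =
     \<lparr>dom = dom I \<union> dom J, cint = \<lambda>A. cint I A \<union> cint J A, rint = \<lambda>r. rint I r \<union> rint J r\<rparr>"

lemma rename_interp_simps [simp]:
  "dom (rename_interp f I) = f ` dom I"
  "cint (rename_interp f I) A = f ` cint I A"
  "rint (rename_interp f I) r = map_prod f f ` rint I r"
  by (simp_all add: rename_interp_def)

lemma union_interp_simps [simp]:
  "dom (union_interp I J) = dom I \<union> dom J"
  "cint (union_interp I J) A = cint I A \<union> cint J A"
  "rint (union_interp I J) r = rint I r \<union> rint J r"
  by (simp_all add: union_interp_def)

lemma ext_subset_dom: "valid_interp I \<Longrightarrow> ext I C \<subseteq> dom I"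
  by (induction C) (auto simp: valid_interp_def)

lemma finite_ext: "valid_interp I \<Longrightarrow> finite (ext I C)"
  using ext_subset_dom finite_subset valid_interp_def by metis

lemma cnt_Conj_le: "valid_interp I \<Longrightarrow> cnt I (Conj C D) \<le> cnt I D"
  unfolding cnt_def by (rule card_mono) (auto simp: finite_ext)

lemma ext_rename_interp:
  assumes "inj f"
  shows "ext (rename_interp f I) C = f ` ext I C"
proof (induction C)
  case (Neg C)
  then show ?case by (simp add: image_set_diff assms)
next
  case (Conj C1 C2)
  then show ?case by (simp add: image_Int assms)
next
  case (Ex r C)
  show ?case
  proof (intro set_eqI iffI)
    fix x assume "x \<in> ext (rename_interp f I) (concept.Ex r C)"
    then obtain u v where "x = f u" "u \<in> dom I" "(u, v) \<in> rint I r" "v \<in> ext I C"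
      using Ex.IH by (auto simp: inj_eq[OF assms])
    then show "x \<in> f ` ext I (concept.Ex r C)"
      by auto
  next
    fix x assume "x \<in> f ` ext I (concept.Ex r C)"
    then show "x \<in> ext (rename_interp f I) (concept.Ex r C)"
      using Ex.IH by force
  qed
qed simp_all

lemma valid_interp_rename:
  assumes "valid_interp I"
  shows "valid_interp (rename_interp f I)"
proof -
  have "map_prod f f ` rint I r \<subseteq> f ` dom I \<times> f ` dom I" for r
    using assms image_mono[of "rint I r" "dom I \<times> dom I" "map_prod f f"]
    by (simp add: valid_interp_def map_prod_surj_on)
  with assms show ?thesis
    by (auto simp: valid_interp_def image_mono)
qed

lemma cnt_rename_interp: "inj f \<Longrightarrow> cnt (rename_interp f I) C = cnt I C"
  by (simp add: cnt_def ext_rename_interp card_image inj_on_subset)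

lemma ext_union_interp:
  assumes I: "valid_interp I" and J: "valid_interp J" and disjoint: "dom I \<inter> dom J = {}"
  shows "ext (union_interp I J) C = ext I C \<union> ext J C"
proof (induction C)
  case (Neg C)
  then show ?case
    using ext_subset_dom[OF I, of C] ext_subset_dom[OF J, of C] disjoint
    by auto
next
  case (Conj C1 C2)
  then show ?case
    using ext_subset_dom[OF I, of C1] ext_subset_dom[OF J, of C1]
      ext_subset_dom[OF I, of C2] ext_subset_dom[OF J, of C2] disjoint
    by auto
next
  case (Ex r C)
  have "rint I r \<subseteq> dom I \<times> dom I" "rint J r \<subseteq> dom J \<times> dom J"
    using I J by (auto simp: valid_interp_def)
  then show ?case
    using Ex ext_subset_dom[OF I, of C] ext_subset_dom[OF J, of C] disjoint
    by auto
qed auto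

lemma valid_interp_union:
  "valid_interp I \<Longrightarrow> valid_interp J \<Longrightarrow> valid_interp (union_interp I J)"
  by (auto simp: valid_interp_def)

lemma cnt_union_interp:
  assumes I: "valid_interp I" and J: "valid_interp J" and disjoint: "dom I \<inter> dom J = {}"
  shows "cnt (union_interp I J) C = cnt I C + cnt J C"
proof -
  have "ext I C \<inter> ext J C = {}"
    using ext_subset_dom[OF I, of C] ext_subset_dom[OF J, of C] disjoint by blast
  then show ?thesis
    unfolding cnt_def ext_union_interp[OF assms] by (simp add: card_Un_disjoint finite_ext I J)
qed

definition disjoint_sum :: "('c, 'r) interp \<Rightarrow> ('c, 'r) interp \<Rightarrow> ('c, 'r) interp" where
  "disjoint_sum I J =
     union_interp (rename_interp (\<lambda>n. 2 * n) I) (rename_interp (\<lambda>n. 2 * n + 1) J)"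

lemma valid_interp_disjoint_sum:
  "valid_interp I \<Longrightarrow> valid_interp J \<Longrightarrow> valid_interp (disjoint_sum I J)"
  by (simp add: disjoint_sum_def valid_interp_union valid_interp_rename)

lemma cnt_disjoint_sum:
  assumes "valid_interp I" "valid_interp J"
  shows "cnt (disjoint_sum I J) C = cnt I C + cnt J C"
proof -
  have even: "cnt (rename_interp (\<lambda>n. 2 * n) I) C = cnt I C"
    by (rule cnt_rename_interp) (auto simp: inj_def)
  have odd: "cnt (rename_interp (\<lambda>n. 2 * n + 1) J) C = cnt J C"
    by (rule cnt_rename_interp) (auto simp: inj_def)
  have disjoint:
    "dom (rename_interp (\<lambda>n. 2 * n) I) \<inter> dom (rename_interp (\<lambda>n. 2 * n + 1) J) = {}"
    by auto presburger
  have "cnt (disjoint_sum I J) C =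
      cnt (rename_interp (\<lambda>n. 2 * n) I) C + cnt (rename_interp (\<lambda>n. 2 * n + 1) J) C"
    unfolding disjoint_sum_def
    by (rule cnt_union_interp[OF valid_interp_rename[OF assms(1)] valid_interp_rename[OF assms(2)]
          disjoint])
  also have "\<dots> = cnt I C + cnt J C"
    using even odd by (rule arg_cong2)
  finally show ?thesis .
qed

lemma sat_cond_iff_linear:
  assumes "valid_interp I"
  shows "sat_cond I c \<longleftrightarrow>
    real_of_rat (lower c) * real (cnt I (cante c)) \<le> real (cnt I (Conj (ccons c) (cante c))) \<and>
    real (cnt I (Conj (ccons c) (cante c))) \<le> real_of_rat (upper c) * real (cnt I (cante c))"
proof (cases "cnt I (cante c) = 0")
  case True
  then show ?thesis
    using cnt_Conj_le[OF assms, of "ccons c" "cante c"] by (simp add: sat_cond_def)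
next
  case False
  then have "real (cnt I (cante c)) > 0"
    by simp
  with False show ?thesis
    unfolding sat_cond_def Let_def by (simp add: le_divide_eq divide_le_eq)
qed

lemma sat_cond_disjoint_sum:
  assumes "valid_interp I" "valid_interp J" "sat_cond I c" "sat_cond J c"
  shows "sat_cond (disjoint_sum I J) c"
  using assms
  by (simp add: sat_cond_iff_linear valid_interp_disjoint_sum cnt_disjoint_sum distrib_left)

lemma Mod_disjoint_sum: "I \<in> Mod K \<Longrightarrow> J \<in> Mod K \<Longrightarrow> disjoint_sum I J \<in> Mod K"
  by (simp add: Mod_def valid_interp_disjoint_sum sat_cond_disjoint_sum)

fun copies :: "nat \<Rightarrow> ('c, 'r) interp \<Rightarrow> ('c, 'r) interp" where
  "copies 0 I = I"
| "copies (Suc k) I = disjoint_sum I (copies k I)"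

lemma valid_interp_copies: "valid_interp I \<Longrightarrow> valid_interp (copies k I)"
  by (induction k) (simp_all add: valid_interp_disjoint_sum)

lemma Mod_copies: "I \<in> Mod K \<Longrightarrow> copies k I \<in> Mod K"
  by (induction k) (simp_all add: Mod_disjoint_sum)

lemma cnt_copies: "valid_interp I \<Longrightarrow> cnt (copies k I) C = Suc k * cnt I C"
  by (induction k) (simp_all add: cnt_disjoint_sum valid_interp_copies)

lemma Mod_weighted_sum:
  assumes "I\<^sub>1 \<in> Mod K" "I\<^sub>2 \<in> Mod K"
  obtains J where "J \<in> Mod K" "\<And>E. cnt J E = Suc a * cnt I\<^sub>1 E + Suc b * cnt I\<^sub>2 E"
proof
  have "valid_interp I\<^sub>1" "valid_interp I\<^sub>2"
    using assms by (simp_all add: Mod_def)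
  then show "cnt (disjoint_sum (copies a I\<^sub>1) (copies b I\<^sub>2)) E =
      Suc a * cnt I\<^sub>1 E + Suc b * cnt I\<^sub>2 E" for E
    by (simp only: cnt_disjoint_sum cnt_copies valid_interp_copies)
  show "disjoint_sum (copies a I\<^sub>1) (copies b I\<^sub>2) \<in> Mod K"
    using assms by (simp add: Mod_disjoint_sum Mod_copies)
qed

lemma succ_nat_floor_bounds:
  fixes y :: real
  assumes "0 \<le> y"
  shows "y \<le> real (Suc (nat \<lfloor>y\<rfloor>))" and "real (Suc (nat \<lfloor>y\<rfloor>)) \<le> y + 1"
  using assms of_int_floor_le[of y] real_of_int_floor_add_one_gt[of y] by linarith+

lemma weighted_mediant_approx:
  fixes p\<^sub>1 q\<^sub>1 p\<^sub>2 q\<^sub>2 x \<epsilon> :: real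
  assumes "0 < q\<^sub>1" "0 < q\<^sub>2" "p\<^sub>1 / q\<^sub>1 < x" "x \<le> p\<^sub>2 / q\<^sub>2" "0 < \<epsilon>"
  shows "\<exists>a b :: nat.
    \<bar>(Suc a * p\<^sub>1 + Suc b * p\<^sub>2) / (Suc a * q\<^sub>1 + Suc b * q\<^sub>2) - x\<bar> < \<epsilon>"
proof -
  define \<alpha> where "\<alpha> = p\<^sub>2 - x * q\<^sub>2"
  define \<beta> where "\<beta> = x * q\<^sub>1 - p\<^sub>1"
  have "0 \<le> \<alpha>" "0 < \<beta>"
    using assms by (simp_all add: \<alpha>_def \<beta>_def field_simps)
  define \<Delta> where "\<Delta> = \<alpha> * q\<^sub>1 + \<beta> * q\<^sub>2"
  have "0 < \<Delta>"
    using \<open>0 \<le> \<alpha>\<close> \<open>0 < \<beta>\<close> assms by (simp add: \<Delta>_def add_nonneg_pos)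
  obtain n :: nat where n: "(\<alpha> + \<beta>) / (\<Delta> * \<epsilon>) < n"
    using reals_Archimedean2 by blast
  have "0 < (\<alpha> + \<beta>) / (\<Delta> * \<epsilon>)"
    using \<open>0 \<le> \<alpha>\<close> \<open>0 < \<beta>\<close> \<open>0 < \<Delta>\<close> assms by simp
  with n have "0 < real n" by linarith
  \<comment> \<open>with \<open>A \<approx> n \<alpha>\<close> and \<open>B \<approx> n \<beta>\<close> the numerator of the error, \<open>B \<alpha> - A \<beta>\<close>, stays
    bounded while the denominator grows like \<open>n \<Delta>\<close>\<close>
  define a where "a = nat \<lfloor>n * \<alpha>\<rfloor>"
  define b where "b = nat \<lfloor>n * \<beta>\<rfloor>"
  define A where "A = real (Suc a)"
  define B where "B = real (Suc b)"
  have A: "n * \<alpha> \<le> A" "A \<le> n * \<alpha> + 1" and B: "n * \<beta> \<le> B" "B \<le> n * \<beta> + 1"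
    unfolding A_def B_def a_def b_def
    using succ_nat_floor_bounds \<open>0 \<le> \<alpha>\<close> \<open>0 < \<beta>\<close> \<open>0 < real n\<close> by simp_all
  define Den where "Den = A * q\<^sub>1 + B * q\<^sub>2"
  have "n * \<alpha> * q\<^sub>1 + n * \<beta> * q\<^sub>2 \<le> Den"
    unfolding Den_def using A B assms by (intro add_mono mult_right_mono) auto
  then have Den_ge: "n * \<Delta> \<le> Den"
    by (simp add: \<Delta>_def algebra_simps)
  have "0 < Den"
    using Den_ge \<open>0 < real n\<close> \<open>0 < \<Delta>\<close> by (smt (verit) mult_pos_pos)
  have error: "(A * p\<^sub>1 + B * p\<^sub>2) - x * Den = (B - n * \<beta>) * \<alpha> - (A - n * \<alpha>) * \<beta>"
    by (simp add: Den_def \<alpha>_def \<beta>_def algebra_simps)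
  have "\<bar>(B - n * \<beta>) * \<alpha> - (A - n * \<alpha>) * \<beta>\<bar> \<le> \<alpha> + \<beta>"
    using A B \<open>0 \<le> \<alpha>\<close> \<open>0 < \<beta>\<close>
    by (smt (verit) mult_left_le_one_le mult_nonneg_nonneg)
  then have "\<bar>(A * p\<^sub>1 + B * p\<^sub>2) / Den - x\<bar> \<le> (\<alpha> + \<beta>) / Den"
    using \<open>0 < Den\<close> error by (simp add: field_simps)
  also have "\<dots> \<le> (\<alpha> + \<beta>) / (n * \<Delta>)"
    using Den_ge \<open>0 < real n\<close> \<open>0 < \<Delta>\<close> \<open>0 < Den\<close> \<open>0 \<le> \<alpha>\<close> \<open>0 < \<beta>\<close>
    by (intro divide_left_mono) auto
  also have "\<dots> < \<epsilon>"
    using n \<open>0 < real n\<close> \<open>0 < \<Delta>\<close> assms(5) by (simp add: field_simps mult.commute)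
  finally have "\<bar>(A * p\<^sub>1 + B * p\<^sub>2) / Den - x\<bar> < \<epsilon>" .
  then show ?thesis
    unfolding Den_def A_def B_def by (intro exI[of _ a] exI[of _ b])
qed

lemma ratios_bounded:
  shows "bdd_below (ratios K C D)" and "bdd_above (ratios K C D)"
proof -
  have "\<forall>s\<in>ratios K C D. 0 \<le> s \<and> s \<le> 1"
    by (auto simp: ratios_def Mod_def cnt_Conj_le divide_le_eq)
  then show "bdd_below (ratios K C D)" "bdd_above (ratios K C D)"
    by (auto intro!: bdd_belowI bdd_aboveI)
qed

lemma p_entails_model_below:
  assumes "p_entails K C D m M" "m < x"
  obtains I where "I \<in> Mod K" "cnt I D > 0" "real (cnt I (Conj C D)) / real (cnt I D) < x"
proof -
  have nonempty: "ratios K C D \<noteq> {}"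
    using assms(1) by (auto simp: p_entails_def ratios_def)
  have "\<exists>s\<in>ratios K C D. s < x"
    using assms cInf_less_iff[OF nonempty ratios_bounded(1)] by (simp add: p_entails_def)
  then show ?thesis
    using that by (auto simp: ratios_def)
qed

lemma p_entails_model_above:
  assumes "p_entails K C D m M" "x < M"
  obtains I where "I \<in> Mod K" "cnt I D > 0" "x < real (cnt I (Conj C D)) / real (cnt I D)"
proof -
  have nonempty: "ratios K C D \<noteq> {}"
    using assms(1) by (auto simp: p_entails_def ratios_def)
  have "\<exists>s\<in>ratios K C D. x < s"
    using assms less_cSup_iff[OF nonempty ratios_bounded(2)] by (simp add: p_entails_def)
  then show ?thesis
    using that by (auto simp: ratios_def)
qed

theorem proposition3:
  fixes K :: "('c, 'r) kb" and C D :: "('c, 'r) concept" and m M :: real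
  assumes "wf_kb K"
    and "p_entails K C D m M"
  shows "\<forall>x \<epsilon>. m < x \<and> x < M \<and> \<epsilon> > 0 \<longrightarrow>
           (\<exists>I\<in>Mod K. cnt I D > 0 \<and>
              \<bar>real (cnt I (Conj C D)) / real (cnt I D) - x\<bar> < \<epsilon>)"
proof (intro allI impI)
  fix x \<epsilon> :: real
  assume x\<epsilon>: "m < x \<and> x < M \<and> \<epsilon> > 0"
  obtain I\<^sub>1 where I\<^sub>1: "I\<^sub>1 \<in> Mod K" "cnt I\<^sub>1 D > 0"
    "real (cnt I\<^sub>1 (Conj C D)) / real (cnt I\<^sub>1 D) < x"
    using p_entails_model_below[OF assms(2)] x\<epsilon> by blast
  obtain I\<^sub>2 where I\<^sub>2: "I\<^sub>2 \<in> Mod K" "cnt I\<^sub>2 D > 0"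
    "x < real (cnt I\<^sub>2 (Conj C D)) / real (cnt I\<^sub>2 D)"
    using p_entails_model_above[OF assms(2)] x\<epsilon> by blast
  obtain a b :: nat where ab:
    "\<bar>(Suc a * real (cnt I\<^sub>1 (Conj C D)) + Suc b * real (cnt I\<^sub>2 (Conj C D))) /
      (Suc a * real (cnt I\<^sub>1 D) + Suc b * real (cnt I\<^sub>2 D)) - x\<bar> < \<epsilon>"
    using weighted_mediant_approx[of "cnt I\<^sub>1 D" "cnt I\<^sub>2 D" "cnt I\<^sub>1 (Conj C D)" x
        "cnt I\<^sub>2 (Conj C D)" \<epsilon>] I\<^sub>1 I\<^sub>2 x\<epsilon>
    by auto
  obtain J where "J \<in> Mod K" and cnt_J: "\<And>E. cnt J E = Suc a * cnt I\<^sub>1 E + Suc b * cnt I\<^sub>2 E"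
    using Mod_weighted_sum[OF I\<^sub>1(1) I\<^sub>2(1)] by blast
  with ab I\<^sub>1(2) show "\<exists>I\<in>Mod K. cnt I D > 0 \<and>
      \<bar>real (cnt I (Conj C D)) / real (cnt I D) - x\<bar> < \<epsilon>"
    by (intro bexI[of _ J]) (simp_all add: distrib_right)
qed

end
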